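(* Suppose that random variables $X',Y',X'',Y''$ satisfy (1) $(X',Y')\overset{d}{=}(X'',Y'')$; (2) $((X',Y'),(X'',Y''))\overset{d}{=}((X',Y''),(X'',Y'))$; (3) $(X',Y')$ and $(X'',Y'')$ are independent. Then $X',X'',Y',Y''$ are independent.
   Context: $\overset{d}{=}$ denotes equality in distribution. *)

theory Defs
  imports "HOL-Probability.Probability"
begin

end

(* Integrating out Y1 and X2 in the swap invariance gives
   P(X1 \<in> A, Y1 \<in> B) = P(X1 \<in> A, Y2 \<in> B), and the right-hand side factors because
   the pairs are independent and Y2 has the law of Y1. So each pair has independent
   coordinates; together with the independence of the two pairs, the joint law of all four
   variables factors on rectangles, which suffices for independence. *)
theory Submission
  imports Defs
begin

lemma (in prob_space) prob_eq_if_distr_eq: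
  assumes "X \<in> measurable M N" "Y \<in> measurable M N"
    and "distr M N X = distr M N Y" and "A \<in> sets N"
  shows "prob {\<omega>\<in>space M. X \<omega> \<in> A} = prob {\<omega>\<in>space M. Y \<omega> \<in> A}"
  using assms measure_distr[of X M N A] measure_distr[of Y M N A]
  by (simp add: vimage_def Int_def conj_commute)

lemma (in prob_space) indep_vars_finiteI:
  assumes "finite I" "I \<noteq> {}" "\<And>i. i \<in> I \<Longrightarrow> random_variable (M' i) (X i)"
    and "\<And>A. (\<And>i. i \<in> I \<Longrightarrow> A i \<in> sets (M' i)) \<Longrightarrow>
      prob (\<Inter>i\<in>I. X i -` A i \<inter> space M) = (\<Prod>i\<in>I. prob (X i -` A i \<inter> space M))"
  shows "indep_vars M' X I"
  using assms
  by (subst indep_vars_finite[where E = "\<lambda>i. sets (M' i)"])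
    (auto simp: sets.Int_stable sets.space_closed sets.sigma_sets_eq)

locale swap_invariant_iid_pairs = prob_space M
  for M :: "'w measure" and S :: "'a measure" and T :: "'b measure"
    and X1 X2 :: "'w \<Rightarrow> 'a" and Y1 Y2 :: "'w \<Rightarrow> 'b" +
  assumes X1 [measurable]: "X1 \<in> measurable M S" and X2 [measurable]: "X2 \<in> measurable M S"
    and Y1 [measurable]: "Y1 \<in> measurable M T" and Y2 [measurable]: "Y2 \<in> measurable M T"
    and same_distr: "distr M (S \<Otimes>\<^sub>M T) (\<lambda>\<omega>. (X1 \<omega>, Y1 \<omega>))
         = distr M (S \<Otimes>\<^sub>M T) (\<lambda>\<omega>. (X2 \<omega>, Y2 \<omega>))"
    and swap_distr: "distr M ((S \<Otimes>\<^sub>M T) \<Otimes>\<^sub>M (S \<Otimes>\<^sub>M T))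
           (\<lambda>\<omega>. ((X1 \<omega>, Y1 \<omega>), (X2 \<omega>, Y2 \<omega>)))
         = distr M ((S \<Otimes>\<^sub>M T) \<Otimes>\<^sub>M (S \<Otimes>\<^sub>M T))
           (\<lambda>\<omega>. ((X1 \<omega>, Y2 \<omega>), (X2 \<omega>, Y1 \<omega>)))"
    and indep_pairs: "indep_var (S \<Otimes>\<^sub>M T) (\<lambda>\<omega>. (X1 \<omega>, Y1 \<omega>))
           (S \<Otimes>\<^sub>M T) (\<lambda>\<omega>. (X2 \<omega>, Y2 \<omega>))"
begin

lemma prob_swap_Y:
  assumes "A \<in> sets S" "B \<in> sets T" "C \<in> sets S" "D \<in> sets T"
  shows "prob {\<omega>\<in>space M. X1 \<omega> \<in> A \<and> Y1 \<omega> \<in> B \<and> X2 \<omega> \<in> C \<and> Y2 \<omega> \<in> D}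
       = prob {\<omega>\<in>space M. X1 \<omega> \<in> A \<and> Y2 \<omega> \<in> B \<and> X2 \<omega> \<in> C \<and> Y1 \<omega> \<in> D}"
  using prob_eq_if_distr_eq[OF _ _ swap_distr, of "(A \<times> B) \<times> (C \<times> D)"] assms by simp

lemma prob_pairs_indep:
  assumes "A \<in> sets S" "B \<in> sets T" "C \<in> sets S" "D \<in> sets T"
  shows "prob {\<omega>\<in>space M. X1 \<omega> \<in> A \<and> Y1 \<omega> \<in> B \<and> X2 \<omega> \<in> C \<and> Y2 \<omega> \<in> D}
       = prob {\<omega>\<in>space M. X1 \<omega> \<in> A \<and> Y1 \<omega> \<in> B} * prob {\<omega>\<in>space M. X2 \<omega> \<in> C \<and> Y2 \<omega> \<in> D}"
  using indep_varD[OF indep_pairs, of "A \<times> B" "C \<times> D"] assms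
  by (simp add: vimage_def Int_def conj_commute conj_left_commute)

lemma prob_pair2_eq:
  assumes "C \<in> sets S" "D \<in> sets T"
  shows "prob {\<omega>\<in>space M. X2 \<omega> \<in> C \<and> Y2 \<omega> \<in> D} = prob {\<omega>\<in>space M. X1 \<omega> \<in> C \<and> Y1 \<omega> \<in> D}"
  using prob_eq_if_distr_eq[OF _ _ same_distr, of "C \<times> D"] assms by simp

lemma components_in_space:
  assumes "\<omega> \<in> space M"
  shows "X1 \<omega> \<in> space S" "X2 \<omega> \<in> space S" "Y1 \<omega> \<in> space T" "Y2 \<omega> \<in> space T"
  using assms by (auto intro: measurable_space[OF X1] measurable_space[OF X2]
      measurable_space[OF Y1] measurable_space[OF Y2])

lemma prob_X2_eq:
  assumes "C \<in> sets S"
  shows "prob {\<omega>\<in>space M. X2 \<omega> \<in> C} = prob {\<omega>\<in>space M. X1 \<omega> \<in> C}"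
  using prob_pair2_eq[OF assms sets.top] by (simp add: components_in_space cong: conj_cong)

lemma prob_Y2_eq:
  assumes "D \<in> sets T"
  shows "prob {\<omega>\<in>space M. Y2 \<omega> \<in> D} = prob {\<omega>\<in>space M. Y1 \<omega> \<in> D}"
  using prob_pair2_eq[OF sets.top assms] by (simp add: components_in_space cong: conj_cong)

lemma prob_X1_Y1_indep:
  assumes "A \<in> sets S" "B \<in> sets T"
  shows "prob {\<omega>\<in>space M. X1 \<omega> \<in> A \<and> Y1 \<omega> \<in> B}
       = prob {\<omega>\<in>space M. X1 \<omega> \<in> A} * prob {\<omega>\<in>space M. Y1 \<omega> \<in> B}"
proof -
  have "prob {\<omega>\<in>space M. X1 \<omega> \<in> A \<and> Y1 \<omega> \<in> B}
      = prob {\<omega>\<in>space M. X1 \<omega> \<in> A \<and> Y2 \<omega> \<in> space T \<and> X2 \<omega> \<in> space S \<and> Y1 \<omega> \<in> B}"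
    by (simp add: components_in_space cong: conj_cong)
  also have "\<dots> = prob {\<omega>\<in>space M. X1 \<omega> \<in> A \<and> Y1 \<omega> \<in> space T \<and> X2 \<omega> \<in> space S \<and> Y2 \<omega> \<in> B}"
    using prob_swap_Y[OF assms(1) sets.top sets.top assms(2)] by simp
  also have "\<dots> = prob {\<omega>\<in>space M. X1 \<omega> \<in> A} * prob {\<omega>\<in>space M. Y2 \<omega> \<in> B}"
    using prob_pairs_indep[OF assms(1) sets.top sets.top assms(2)] by (simp add: components_in_space cong: conj_cong)
  also have "\<dots> = prob {\<omega>\<in>space M. X1 \<omega> \<in> A} * prob {\<omega>\<in>space M. Y1 \<omega> \<in> B}"
    using prob_Y2_eq[OF assms(2)] by simp
  finally show ?thesis .
qed

lemma prob_components_indep: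
  assumes "A \<in> sets S" "C \<in> sets S" "B \<in> sets T" "D \<in> sets T"
  shows "prob {\<omega>\<in>space M. X1 \<omega> \<in> A \<and> X2 \<omega> \<in> C \<and> Y1 \<omega> \<in> B \<and> Y2 \<omega> \<in> D}
       = prob {\<omega>\<in>space M. X1 \<omega> \<in> A} * prob {\<omega>\<in>space M. X2 \<omega> \<in> C}
         * prob {\<omega>\<in>space M. Y1 \<omega> \<in> B} * prob {\<omega>\<in>space M. Y2 \<omega> \<in> D}"
proof -
  have "prob {\<omega>\<in>space M. X1 \<omega> \<in> A \<and> X2 \<omega> \<in> C \<and> Y1 \<omega> \<in> B \<and> Y2 \<omega> \<in> D}
      = prob {\<omega>\<in>space M. X1 \<omega> \<in> A \<and> Y1 \<omega> \<in> B} * prob {\<omega>\<in>space M. X1 \<omega> \<in> C \<and> Y1 \<omega> \<in> D}"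
    using prob_pairs_indep[of A B C D] prob_pair2_eq[of C D] assms
    by (simp add: conj_commute conj_left_commute)
  then show ?thesis
    using prob_X1_Y1_indep assms prob_X2_eq[of C] prob_Y2_eq[of D] by simp
qed

end

theorem mainTheorem5:
  fixes M :: "'w measure" and S T :: "'a measure"
    and X1 Y1 X2 Y2 :: "'w \<Rightarrow> 'a"
  assumes "prob_space M"
    and "X1 \<in> measurable M S" and "X2 \<in> measurable M S"
    and "Y1 \<in> measurable M T" and "Y2 \<in> measurable M T"
    and "distr M (S \<Otimes>\<^sub>M T) (\<lambda>\<omega>. (X1 \<omega>, Y1 \<omega>))
         = distr M (S \<Otimes>\<^sub>M T) (\<lambda>\<omega>. (X2 \<omega>, Y2 \<omega>))"
    and "distr M ((S \<Otimes>\<^sub>M T) \<Otimes>\<^sub>M (S \<Otimes>\<^sub>M T))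
           (\<lambda>\<omega>. ((X1 \<omega>, Y1 \<omega>), (X2 \<omega>, Y2 \<omega>)))
         = distr M ((S \<Otimes>\<^sub>M T) \<Otimes>\<^sub>M (S \<Otimes>\<^sub>M T))
           (\<lambda>\<omega>. ((X1 \<omega>, Y2 \<omega>), (X2 \<omega>, Y1 \<omega>)))"
    and "prob_space.indep_var M (S \<Otimes>\<^sub>M T) (\<lambda>\<omega>. (X1 \<omega>, Y1 \<omega>))
           (S \<Otimes>\<^sub>M T) (\<lambda>\<omega>. (X2 \<omega>, Y2 \<omega>))"
  shows "prob_space.indep_vars M (\<lambda>i. [S, S, T, T] ! i) (\<lambda>i. [X1, X2, Y1, Y2] ! i) {..<4}"
proof -
  interpret swap_invariant_iid_pairs M S T X1 X2 Y1 Y2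
    by (intro swap_invariant_iid_pairs.intro swap_invariant_iid_pairs_axioms.intro) (fact assms)+
  have four: "{..<4::nat} = {0, 1, 2, 3}" by auto
  show ?thesis
  proof (rule indep_vars_finiteI)
    show "finite {..<4::nat}" "{..<4::nat} \<noteq> {}" by (auto simp: four)
    show "random_variable ([S, S, T, T] ! i) ([X1, X2, Y1, Y2] ! i)" if "i \<in> {..<4}" for i
      using that assms(2-5) by (auto simp: four)
  next
    fix A assume A: "\<And>i. i \<in> {..<4} \<Longrightarrow> A i \<in> sets ([S, S, T, T] ! i)"
    have "A 0 \<in> sets S" "A 1 \<in> sets S" "A 2 \<in> sets T" "A 3 \<in> sets T"
      using A[of 0] A[of 1] A[of 2] A[of 3] by simp_all
    from prob_components_indep[OF this]
    show "prob (\<Inter>j\<in>{..<4}. ([X1, X2, Y1, Y2] ! j) -` A j \<inter> space M)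
        = (\<Prod>j\<in>{..<4}. prob (([X1, X2, Y1, Y2] ! j) -` A j \<inter> space M))"
      by (simp add: four vimage_def Int_def conj_commute conj_left_commute)
  qed
qed

end
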